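(* Let $q\ge0$, $\delta'\ge0$, and let $X$ be a $(1,q)$-quasi-geodesic metric space in which every triangle whose sides are $(1,q)$-quasi-geodesics is $\delta'$-thin. Then $X$ satisfies the four-point condition with constant $\delta=56\delta'+6q$, i.e. for all $x,y,z,w\in X$, $$d(x,z)+d(y,w)\le\max\{d(x,w)+d(y,z),\ d(x,y)+d(z,w)\}+56\delta'+6q.$$
   Context: A $(1,q)$-quasi-geodesic is a map $\gamma:[a,b]\to X$ with $|s-t|-q\le d(\gamma(s),\gamma(t))\le|s-t|+q$ for all $s,t$; $X$ is a $(1,q)$-quasi-geodesic metric space if any two points are joined by one. For $A\subset X$, $\mathcal{N}_r(A)=\{p: d(p,A)\le r\}$. A triangle with sides $\lambda_1,\lambda_2,\lambda_3$ is $\delta'$-thin if $\lambda_i\subset\mathcal{N}_{\delta'}(\lambda_j\cup\lambda_k)$ for all permutations $(i,j,k)$ of $(1,2,3)$. *)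

theory Defs
  imports "HOL-Analysis.Analysis"
begin

definition quasi_geodesic :: "real \<Rightarrow> (real \<Rightarrow> 'a::metric_space) \<Rightarrow> real \<Rightarrow> real \<Rightarrow> bool" where
  "quasi_geodesic q \<gamma> a b \<longleftrightarrow> a \<le> b \<and>
     (\<forall>s\<in>{a..b}. \<forall>t\<in>{a..b}.
        \<bar>s - t\<bar> - q \<le> dist (\<gamma> s) (\<gamma> t) \<and> dist (\<gamma> s) (\<gamma> t) \<le> \<bar>s - t\<bar> + q)"

definition qg_joins :: "real \<Rightarrow> (real \<Rightarrow> 'a::metric_space) \<Rightarrow> real \<Rightarrow> real \<Rightarrow> 'a \<Rightarrow> 'a \<Rightarrow> bool" where
  "qg_joins q \<gamma> a b x y \<longleftrightarrow> quasi_geodesic q \<gamma> a b \<and> \<gamma> a = x \<and> \<gamma> b = y"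

definition quasi_geodesic_space :: "real \<Rightarrow> 'a::metric_space itself \<Rightarrow> bool" where
  "quasi_geodesic_space q _ \<longleftrightarrow> (\<forall>x y::'a. \<exists>\<gamma> a b. qg_joins q \<gamma> a b x y)"

definition nbhd :: "real \<Rightarrow> 'a::metric_space set \<Rightarrow> 'a set" where
  "nbhd r A = {p. infdist p A \<le> r}"

definition thin_triangle :: "real \<Rightarrow> 'a::metric_space set \<Rightarrow> 'a set \<Rightarrow> 'a set \<Rightarrow> bool" where
  "thin_triangle d L1 L2 L3 \<longleftrightarrow>
     L1 \<subseteq> nbhd d (L2 \<union> L3) \<and> L2 \<subseteq> nbhd d (L1 \<union> L3) \<and> L3 \<subseteq> nbhd d (L1 \<union> L2)"

end

theory Submission
  imports Defs
begin

text \<open>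
  If \<open>q \<le> 2\<delta>'\<close>, fix a quasi-geodesic triangle \<open>xyz\<close> and a fourth point \<open>w\<close>. Thinness of
  the triangle \<open>wzx\<close> lets one walk along its side \<open>zx\<close> from \<open>z\<close>, which lies on \<open>wz\<close>, to
  \<open>x\<close>, which lies on \<open>wx\<close>, and find two nearby points of \<open>zx\<close>, one close to each of these
  sides; hence some point \<open>p\<close> of \<open>zx\<close> has \<open>d(w,p) \<le> (z|x)\<^sub>w + O(\<delta>' + q)\<close>. Thinness of
  \<open>xyz\<close> puts \<open>p\<close> close to \<open>xy\<close> or to \<open>yz\<close>, and the Gromov product of \<open>w\<close> with that side
  is at most \<open>d(w,p) + O(q)\<close>. Unfolding the Gromov products gives the four-point condition
  with constant \<open>6\<delta>' + 11q \<le> 16\<delta>' + 6q\<close>.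

  If \<open>q > 2\<delta>'\<close>, the hypothesis also applies to degenerate triangles made of a quasi-geodesic
  loop of parameter length \<open>q\<close> and two constant paths, so every point of such a loop lies
  within \<open>\<delta>'\<close> of its base point. Going out and back along a quasi-geodesic is such a loop,
  and any two points at distance at most \<open>q\<close> form one; chaining steps of parameter length
  \<open>q/2\<close> shows that the space has diameter at most \<open>\<delta>'\<close>.
\<close>

definition gromov_product :: "'a::metric_space \<Rightarrow> 'a \<Rightarrow> 'a \<Rightarrow> real" where
  "gromov_product w x y = (dist w x + dist w y - dist x y) / 2"

lemma two_gromov_product: "2 * gromov_product w x y = dist w x + dist w y - dist x y"
  by (simp add: gromov_product_def)

lemma quasi_geodesic_dist_le:
  "quasi_geodesic q \<gamma> a b \<Longrightarrow> s \<in> {a..b} \<Longrightarrow> t \<in> {a..b} \<Longrightarrow> dist (\<gamma> s) (\<gamma> t) \<le> \<bar>s - t\<bar> + q"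
  unfolding quasi_geodesic_def by blast

lemma quasi_geodesic_dist_ge:
  "quasi_geodesic q \<gamma> a b \<Longrightarrow> s \<in> {a..b} \<Longrightarrow> t \<in> {a..b} \<Longrightarrow> \<bar>s - t\<bar> - q \<le> dist (\<gamma> s) (\<gamma> t)"
  unfolding quasi_geodesic_def by blast

lemma quasi_geodesic_short_interval:
  assumes "a \<le> b" "b - a \<le> q"
    and "\<And>s t. s \<in> {a..b} \<Longrightarrow> t \<in> {a..b} \<Longrightarrow> dist (\<gamma> s) (\<gamma> t) \<le> \<bar>s - t\<bar> + q"
  shows "quasi_geodesic q \<gamma> a b"
  unfolding quasi_geodesic_def
proof (intro conjI ballI)
  fix s t assume "s \<in> {a..b}" "t \<in> {a..b}"
  then have "\<bar>s - t\<bar> - q \<le> 0" using assms(2) by (auto simp: abs_if)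
  then show "\<bar>s - t\<bar> - q \<le> dist (\<gamma> s) (\<gamma> t)" using zero_le_dist order_trans by blast
qed (use assms in auto)

lemma qg_joinsD:
  assumes "qg_joins q \<gamma> a b x y"
  shows "quasi_geodesic q \<gamma> a b" "a \<le> b" "\<gamma> a = x" "\<gamma> b = y"
  using assms unfolding qg_joins_def quasi_geodesic_def by simp_all

lemma qg_joins_image_nonempty: "qg_joins q \<gamma> a b x y \<Longrightarrow> \<gamma> ` {a..b} \<noteq> {}"
  unfolding qg_joins_def quasi_geodesic_def by auto

lemma qg_joins_ends_in_image: "qg_joins q \<gamma> a b x y \<Longrightarrow> x \<in> \<gamma> ` {a..b} \<and> y \<in> \<gamma> ` {a..b}"
  unfolding qg_joins_def quasi_geodesic_def by (auto intro!: image_eqI)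

lemma qg_joins_detour_le:
  assumes "qg_joins q \<gamma> a b x y" "p \<in> \<gamma> ` {a..b}"
  shows "dist x p + dist p y \<le> dist x y + 3 * q"
proof -
  obtain t where t: "t \<in> {a..b}" "p = \<gamma> t" using assms(2) by blast
  note Q = qg_joinsD(1)[OF assms(1)]
  have ends: "a \<in> {a..b}" "b \<in> {a..b}" "\<gamma> a = x" "\<gamma> b = y"
    using qg_joinsD[OF assms(1)] by auto
  have "dist (\<gamma> a) (\<gamma> t) \<le> \<bar>a - t\<bar> + q" "dist (\<gamma> t) (\<gamma> b) \<le> \<bar>t - b\<bar> + q"
    "\<bar>a - b\<bar> - q \<le> dist (\<gamma> a) (\<gamma> b)"
    using quasi_geodesic_dist_le[OF Q] quasi_geodesic_dist_ge[OF Q] ends t(1) by blast+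
  then show ?thesis using t ends by (auto simp: abs_if split: if_splits)
qed

lemma gromov_product_le_dist_qg_joins:
  assumes "qg_joins q \<gamma> a b x y" "p \<in> \<gamma> ` {a..b}"
  shows "gromov_product w x y \<le> dist w p + 3 / 2 * q"
proof -
  have "dist x p + dist p y \<le> dist x y + 3 * q" by (rule qg_joins_detour_le[OF assms])
  moreover have "dist w x \<le> dist w p + dist p x" "dist w y \<le> dist w p + dist p y"
    by (rule dist_triangle)+
  ultimately show ?thesis by (simp add: gromov_product_def dist_commute)
qed

lemma dist_le_gromov_product_if_near_detour_points:
  fixes w x y u v p p' :: "'a::metric_space"
  assumes "dist w u + dist u x \<le> dist w x + c" "dist y v + dist v w \<le> dist y w + c"
    and "dist p u \<le> r" "dist p' v \<le> r" "dist p p' \<le> l"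
  shows "dist w p \<le> gromov_product w x y + 2 * r + l + c"
proof -
  have "dist x y \<le> dist x u + dist u p + dist p p' + dist p' v + dist v y"
    using dist_triangle[of x y p] dist_triangle[of x p u]
      dist_triangle[of p y p'] dist_triangle[of p' y v] by linarith
  moreover have "dist w p \<le> dist w u + dist u p" "dist w p \<le> dist w v + dist v p' + dist p' p"
    using dist_triangle[of w p u] dist_triangle[of w p v] dist_triangle[of v p p'] by linarith+
  ultimately show ?thesis
    using assms two_gromov_product[of w x y] dist_commute[of p u] dist_commute[of p' v]
      dist_commute[of p p'] dist_commute[of u x] dist_commute[of y v] dist_commute[of v w]
      dist_commute[of y w]
    by linarith
qed

lemma exists_near_if_infdist_le:
  assumes "infdist p A \<le> r" "A \<noteq> {}" "e > 0"
  obtains u where "u \<in> A" "dist p u \<le> r + e"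
proof -
  have "(INF a\<in>A. dist p a) < r + e" using assms infdist_notempty[OF assms(2)] by auto
  then show ?thesis using that cINF_less_iff[of A "dist p" "r + e"] assms(2) by force
qed

lemma thin_triangle_infdist_le:
  assumes "thin_triangle d L1 L2 L3" "p \<in> L1"
  shows "infdist p (L2 \<union> L3) \<le> d"
proof -
  have "L1 \<subseteq> nbhd d (L2 \<union> L3)" using assms(1) unfolding thin_triangle_def by (rule conjunct1)
  with assms(2) show ?thesis unfolding nbhd_def by blast
qed

lemma thin_triangle_near_other_sides:
  assumes "thin_triangle d L1 L2 L3" "p \<in> L1" "L2 \<noteq> {}" "e > 0"
  obtains r where "r \<in> L2 \<union> L3" "dist p r \<le> d + e"
proof -
  have "L2 \<union> L3 \<noteq> {}" using assms(3) by blast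
  with thin_triangle_infdist_le[OF assms(1,2)] show ?thesis
    using exists_near_if_infdist_le assms(4) that by blast
qed

text \<open>Quasi-geodesics need not be continuous; this replaces connectedness of \<open>[a,b]\<close>.\<close>

lemma interval_cover_close_points:
  fixes a b e :: real
  assumes "a \<le> b" "e > 0" "P a" "Q b" and cover: "\<And>t. t \<in> {a..b} \<Longrightarrow> P t \<or> Q t"
  obtains s s' where "s \<in> {a..b}" "s' \<in> {a..b}" "P s" "Q s'" "\<bar>s - s'\<bar> \<le> e"
proof -
  define S where "S = {t \<in> {a..b}. P t}"
  define \<sigma> where "\<sigma> = Sup S"
  have aS: "a \<in> S" and bdd: "bdd_above S" using assms unfolding S_def by auto
  have \<sigma>: "a \<le> \<sigma>" "\<sigma> \<le> b"
    unfolding \<sigma>_def using cSup_upper[OF aS bdd] aS by (auto simp: S_def intro!: cSup_least)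
  have "\<sigma> - e/2 < Sup S" using assms(2) unfolding \<sigma>_def by simp
  then obtain s where s: "s \<in> S" "\<sigma> - e/2 < s" using less_cSupD aS by blast
  have "s \<le> \<sigma>" using cSup_upper[OF s(1) bdd] unfolding \<sigma>_def .
  define s' where "s' = min b (\<sigma> + e/2)"
  have s': "s' \<in> {a..b}" "\<sigma> \<le> s'" using \<sigma> assms(2) unfolding s'_def by auto
  have "Q s'"
  proof (cases "s' = b")
    case False
    then have "\<sigma> < s'" using assms(2) unfolding s'_def by auto
    then have "s' \<notin> S" using cSup_upper[OF _ bdd] unfolding \<sigma>_def by force
    then show ?thesis using cover[OF s'(1)] unfolding S_def using s'(1) by blast
  qed (use assms(4) in simp)
  moreover have "\<bar>s - s'\<bar> \<le> e" using s(2) \<open>s \<le> \<sigma>\<close> s'(2) unfolding s'_def by auto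
  ultimately show ?thesis using that s(1) s' unfolding S_def by blast
qed

locale thin_quasi_geodesic_space =
  fixes q d :: real and ty :: "'a::metric_space itself"
  assumes q_nonneg: "q \<ge> 0" and d_nonneg: "d \<ge> 0"
    and quasi_geodesic: "quasi_geodesic_space q TYPE('a)"
    and thin: "\<And>(x::'a) y z \<gamma>1 a1 b1 \<gamma>2 a2 b2 \<gamma>3 a3 b3.
           qg_joins q \<gamma>1 a1 b1 x y \<Longrightarrow> qg_joins q \<gamma>2 a2 b2 y z \<Longrightarrow> qg_joins q \<gamma>3 a3 b3 z x \<Longrightarrow>
           thin_triangle d (\<gamma>1 ` {a1..b1}) (\<gamma>2 ` {a2..b2}) (\<gamma>3 ` {a3..b3})"
begin

lemma exists_qg_joins:
  fixes x y :: 'a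
  obtains \<gamma> a b where "qg_joins q \<gamma> a b x y"
  using quasi_geodesic unfolding quasi_geodesic_space_def by blast

lemma exists_side_point_near_gromov_product:
  fixes x y w :: 'a
  assumes A: "qg_joins q \<alpha> a b x y" and e: "e > 0"
  shows "\<exists>p \<in> \<alpha> ` {a..b}. dist w p \<le> gromov_product w x y + 2 * d + 4 * q + 3 * e"
proof -
  obtain \<rho> a2 b2 where R: "qg_joins q \<rho> a2 b2 y w" by (rule exists_qg_joins)
  obtain \<beta> a3 b3 where B: "qg_joins q \<beta> a3 b3 w x" by (rule exists_qg_joins)
  note QA = qg_joinsD(1)[OF A] and ends = qg_joinsD(2-4)[OF A]
  define near_\<beta> where "near_\<beta> t \<longleftrightarrow> (\<exists>u \<in> \<beta> ` {a3..b3}. dist (\<alpha> t) u \<le> d + e)" for t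
  define near_\<rho> where "near_\<rho> t \<longleftrightarrow> (\<exists>v \<in> \<rho> ` {a2..b2}. dist (\<alpha> t) v \<le> d + e)" for t
  have cover: "near_\<beta> t \<or> near_\<rho> t" if "t \<in> {a..b}" for t
  proof -
    have "\<alpha> t \<in> \<alpha> ` {a..b}" using that by blast
    then obtain r where "r \<in> \<rho> ` {a2..b2} \<union> \<beta> ` {a3..b3}" "dist (\<alpha> t) r \<le> d + e"
      by (rule thin_triangle_near_other_sides[OF thin[OF A R B] _ qg_joins_image_nonempty[OF R] e])
    then show ?thesis unfolding near_\<beta>_def near_\<rho>_def by blast
  qed
  have start: "near_\<beta> a"
    unfolding near_\<beta>_def ends(2) using qg_joins_ends_in_image[OF B] d_nonneg e by force
  have finish: "near_\<rho> b"
    unfolding near_\<rho>_def ends(3) using qg_joins_ends_in_image[OF R] d_nonneg e by force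
  obtain s s' where s: "s \<in> {a..b}" "s' \<in> {a..b}" "near_\<beta> s" "near_\<rho> s'"
      and ss': "\<bar>s - s'\<bar> \<le> e"
    by (rule interval_cover_close_points[OF ends(1) e start finish cover])
  obtain u where u: "u \<in> \<beta> ` {a3..b3}" "dist (\<alpha> s) u \<le> d + e"
    using s(3) unfolding near_\<beta>_def by blast
  obtain v where v: "v \<in> \<rho> ` {a2..b2}" "dist (\<alpha> s') v \<le> d + e"
    using s(4) unfolding near_\<rho>_def by blast
  have "dist (\<alpha> s) (\<alpha> s') \<le> e + q" using quasi_geodesic_dist_le[OF QA s(1,2)] ss' by linarith
  with qg_joins_detour_le[OF B u(1)] qg_joins_detour_le[OF R v(1)] u(2) v(2)
  have "dist w (\<alpha> s) \<le> gromov_product w x y + 2 * (d + e) + (e + q) + 3 * q"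
    by (rule dist_le_gromov_product_if_near_detour_points)
  then have "dist w (\<alpha> s) \<le> gromov_product w x y + 2 * d + 4 * q + 3 * e" by simp
  then show ?thesis using s(1) by blast
qed

lemma four_point_condition_plus_eps:
  fixes x y z w :: 'a
  assumes e: "e > 0"
  shows "dist x z + dist y w \<le> max (dist x w + dist y z) (dist x y + dist z w) + 6 * d + 11 * q + 8 * e"
proof -
  obtain \<alpha> a1 b1 where A: "qg_joins q \<alpha> a1 b1 x y" by (rule exists_qg_joins)
  obtain \<rho> a2 b2 where R: "qg_joins q \<rho> a2 b2 y z" by (rule exists_qg_joins)
  obtain \<mu> a3 b3 where M: "qg_joins q \<mu> a3 b3 z x" by (rule exists_qg_joins)
  obtain p where p: "p \<in> \<mu> ` {a3..b3}" "dist w p \<le> gromov_product w z x + 2 * d + 4 * q + 3 * e"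
    using exists_side_point_near_gromov_product[OF M e] by blast
  obtain r where r: "r \<in> \<alpha> ` {a1..b1} \<union> \<rho> ` {a2..b2}" "dist p r \<le> d + e"
    using thin_triangle_near_other_sides[OF thin[OF M A R] p(1) qg_joins_image_nonempty[OF A] e] .
  have near: "dist w r \<le> gromov_product w z x + 3 * d + 4 * q + 4 * e"
    using dist_triangle[of w r p] p(2) r(2) by linarith
  note two_gp = two_gromov_product[of w z x] two_gromov_product[of w x y] two_gromov_product[of w y z]
  note commute = dist_commute[of z x] dist_commute[of w x] dist_commute[of w y] dist_commute[of w z]
  from r(1) consider "r \<in> \<alpha> ` {a1..b1}" | "r \<in> \<rho> ` {a2..b2}" by blast
  then show ?thesis
  proof cases
    case 1
    then have "gromov_product w x y \<le> dist w r + 3 / 2 * q" by (rule gromov_product_le_dist_qg_joins[OF A])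
    then have "dist x z + dist y w \<le> dist x y + dist z w + 6 * d + 11 * q + 8 * e"
      using near two_gp commute by linarith
    then show ?thesis by linarith
  next
    case 2
    then have "gromov_product w y z \<le> dist w r + 3 / 2 * q" by (rule gromov_product_le_dist_qg_joins[OF R])
    then have "dist x z + dist y w \<le> dist x w + dist y z + 6 * d + 11 * q + 8 * e"
      using near two_gp commute by linarith
    then show ?thesis by linarith
  qed
qed

lemma four_point_condition:
  fixes x y z w :: 'a
  shows "dist x z + dist y w \<le> max (dist x w + dist y z) (dist x y + dist z w) + 6 * d + 11 * q"
proof (rule field_le_epsilon)
  fix e :: real assume "0 < e"
  then show "dist x z + dist y w \<le> max (dist x w + dist y z) (dist x y + dist z w) + 6 * d + 11 * q + e"
    using four_point_condition_plus_eps[of "e / 8"] by simp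
qed

lemma quasi_geodesic_loop_near_base:
  fixes \<omega> :: "real \<Rightarrow> 'a"
  assumes "quasi_geodesic q \<omega> a b" "\<omega> a = u" "\<omega> b = u" "r \<in> {a..b}"
  shows "dist u (\<omega> r) \<le> d"
proof -
  have loop: "qg_joins q \<omega> a b u u" using assms(1-3) unfolding qg_joins_def by blast
  have const: "qg_joins q (\<lambda>_. u) 0 0 u u"
    unfolding qg_joins_def quasi_geodesic_def using q_nonneg by auto
  have "thin_triangle d (\<omega> ` {a..b}) {u} {u}"
    using thin[OF loop const const] by simp
  moreover have "\<omega> r \<in> \<omega> ` {a..b}" using assms(4) by blast
  ultimately have "infdist (\<omega> r) ({u} \<union> {u}) \<le> d" by (rule thin_triangle_infdist_le)
  then show ?thesis by (simp add: dist_commute)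
qed

lemma dist_le_d_if_le_q:
  fixes u v :: 'a
  assumes "q > 0" "dist u v \<le> q"
  shows "dist u v \<le> d"
proof -
  define \<omega> where "\<omega> r = (if r = q / 2 then v else u)" for r :: real
  have "quasi_geodesic q \<omega> 0 q"
    by (rule quasi_geodesic_short_interval)
      (use assms in \<open>auto simp: \<omega>_def dist_commute abs_if\<close>)
  then have "dist u (\<omega> (q / 2)) \<le> d"
    by (rule quasi_geodesic_loop_near_base) (use assms(1) in \<open>auto simp: \<omega>_def\<close>)
  then show ?thesis by (simp add: \<omega>_def)
qed

lemma quasi_geodesic_close_params:
  fixes \<gamma> :: "real \<Rightarrow> 'a"
  assumes q: "q > 0" and Q: "quasi_geodesic q \<gamma> a b"
    and st: "s \<in> {a..b}" "t \<in> {a..b}" "\<bar>s - t\<bar> \<le> q / 2"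
  shows "dist (\<gamma> s) (\<gamma> t) \<le> d"
proof -
  define \<theta> where "\<theta> r = min r (q - r) / (q / 2)" for r
  define \<tau> where "\<tau> r = (1 - \<theta> r) * s + \<theta> r * t" for r
  have \<tau>_in: "\<tau> r \<in> {a..b}" if "r \<in> {0..q}" for r
  proof -
    have "0 \<le> \<theta> r" "\<theta> r \<le> 1" using that q by (auto simp: \<theta>_def min_def field_simps)
    then show ?thesis
      using convexD_alt[OF convex_real_interval(5) st(1,2)] unfolding \<tau>_def by simp
  qed
  have "quasi_geodesic q (\<gamma> \<circ> \<tau>) 0 q"
  proof (rule quasi_geodesic_short_interval)
    fix r1 r2 assume r: "r1 \<in> {0..q}" "r2 \<in> {0..q}"
    have "\<bar>\<tau> r1 - \<tau> r2\<bar> = \<bar>\<theta> r1 - \<theta> r2\<bar> * \<bar>s - t\<bar>"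
      by (simp add: \<tau>_def abs_mult[symmetric] algebra_simps)
    also have "\<dots> \<le> \<bar>\<theta> r1 - \<theta> r2\<bar> * (q / 2)" by (rule mult_left_mono[OF st(3)]) simp
    also have "\<dots> = \<bar>min r1 (q - r1) - min r2 (q - r2)\<bar>"
      using q by (simp add: \<theta>_def diff_divide_distrib[symmetric] abs_divide del: divide_divide_eq_right)
    also have "\<dots> \<le> \<bar>r1 - r2\<bar>" by (simp add: min_def abs_if)
    finally show "dist ((\<gamma> \<circ> \<tau>) r1) ((\<gamma> \<circ> \<tau>) r2) \<le> \<bar>r1 - r2\<bar> + q"
      using quasi_geodesic_dist_le[OF Q \<tau>_in[OF r(1)] \<tau>_in[OF r(2)]] by simp
  qed (use q in auto)
  moreover have "(\<gamma> \<circ> \<tau>) 0 = \<gamma> s" "(\<gamma> \<circ> \<tau>) q = \<gamma> s"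
    using q by (simp_all add: \<tau>_def \<theta>_def)
  ultimately have "dist (\<gamma> s) ((\<gamma> \<circ> \<tau>) (q / 2)) \<le> d"
    by (rule quasi_geodesic_loop_near_base) (use q in auto)
  moreover have "(\<gamma> \<circ> \<tau>) (q / 2) = \<gamma> t" using q by (simp add: \<tau>_def \<theta>_def)
  ultimately show ?thesis by simp
qed

lemma dist_le_d_if_q_large:
  fixes x y :: 'a
  assumes "q > 2 * d"
  shows "dist x y \<le> d"
proof -
  have q: "q > 0" using assms d_nonneg by linarith
  obtain \<gamma> a b where "qg_joins q \<gamma> a b x y" by (rule exists_qg_joins)
  note Q = qg_joinsD(1)[OF this] and ends = qg_joinsD(2-4)[OF this]
  have "dist x (\<gamma> t) \<le> d" if "t \<in> {a..b}" "t \<le> a + real n * (q / 2)" for n t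
    using that
  proof (induction n arbitrary: t)
    case 0
    then show ?case using ends d_nonneg by auto
  next
    case (Suc n)
    define t' where "t' = max a (t - q / 2)"
    have t': "t' \<in> {a..b}" "t' \<le> a + real n * (q / 2)" "\<bar>t' - t\<bar> \<le> q / 2"
      using Suc.prems q unfolding t'_def by (auto simp: max_def field_simps)
    have "dist x (\<gamma> t) \<le> dist x (\<gamma> t') + dist (\<gamma> t') (\<gamma> t)" by (rule dist_triangle)
    also have "\<dots> \<le> d + d"
      using Suc.IH[OF t'(1,2)] quasi_geodesic_close_params[OF q Q t'(1) Suc.prems(1) t'(3)] by simp
    finally show ?case using dist_le_d_if_le_q[OF q] assms by simp
  qed
  moreover obtain n :: nat where "(b - a) / (q / 2) < real n" using reals_Archimedean2 by blast
  then have "b \<le> a + real n * (q / 2)" using q by (simp add: pos_divide_less_eq)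
  ultimately show ?thesis using ends by auto
qed

end

theorem mainTheorem7:
  fixes q \<delta>' :: real
  assumes "q \<ge> 0" and "\<delta>' \<ge> 0"
    and "quasi_geodesic_space q TYPE('a::metric_space)"
    and "\<And>(x::'a) y z \<gamma>1 a1 b1 \<gamma>2 a2 b2 \<gamma>3 a3 b3.
           qg_joins q \<gamma>1 a1 b1 x y \<Longrightarrow> qg_joins q \<gamma>2 a2 b2 y z \<Longrightarrow> qg_joins q \<gamma>3 a3 b3 z x \<Longrightarrow>
           thin_triangle \<delta>' (\<gamma>1 ` {a1..b1}) (\<gamma>2 ` {a2..b2}) (\<gamma>3 ` {a3..b3})"
  shows "\<forall>x y z w :: 'a. dist x z + dist y w \<le>
           max (dist x w + dist y z) (dist x y + dist z w) + 56 * \<delta>' + 6 * q"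
proof (intro allI)
  interpret thin_quasi_geodesic_space q \<delta>' "TYPE('a)" using assms by unfold_locales
  fix x y z w :: 'a
  show "dist x z + dist y w \<le> max (dist x w + dist y z) (dist x y + dist z w) + 56 * \<delta>' + 6 * q"
  proof (cases "q \<le> 2 * \<delta>'")
    case True
    then show ?thesis using four_point_condition[of x z y w] assms(1,2) by linarith
  next
    case False
    then have "dist x z \<le> \<delta>'" "dist y w \<le> \<delta>'" using dist_le_d_if_q_large by simp_all
    then show ?thesis using assms(1,2) zero_le_dist[of x w] zero_le_dist[of y z] by linarith
  qed
qed

end
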